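(* For all $0\le t<1$ and $x\in\mathbb{R}$, $V^*(t,x)\ge f(t,x)$, where $$V^*(t,x)=\begin{cases}\sqrt{1-t}\,\sqrt{2\pi}\,\Phi(-x/\sqrt{1-t})e^{x^2/(2(1-t))}v(C^* ), & x>C^*\sqrt{1-t},\\ f(t,x), & x\le C^*\sqrt{1-t}.\end{cases}$$
   Context: $\Phi$ is the standard normal distribution function. $B^*\approx0.84$ is the unique positive solution of $\sqrt{2\pi}(1-B^2)e^{B^2/2}\Phi(B)=B$. Define $U(t,x)=\sqrt{2\pi(1-t)}(1-(B^* )^2)e^{x^2/(2(1-t))}\Phi(x/\sqrt{1-t})$ for $x<B^*\sqrt{1-t}$, and $U(t,x)=x$ otherwise, for $0\le t<1$. Set $f(t,x)=U(t,x)-x$. For $C\le B^*$ let $v(C)=\frac{1}{\Phi(-C)}[(1-(B^* )^2)\Phi(C)-Ce^{-C^2/2}/\sqrt{2\pi}]$ and $u(C)=1-(B^* )^2-(1-C^2)\Phi(-C)-\frac{C}{\sqrt{2\pi}}e^{-C^2/2}$. $C^*<0$ is the unique negative zero of $u$, which maximizes $v$ on $(-\infty,B^*]$. *)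

theory Defs
  imports "HOL-Probability.Probability"
begin

definition Phi :: "real \<Rightarrow> real" where
  "Phi x = (LBINT s:{..x}. std_normal_density s)"

definition Bstar :: real where
  "Bstar = (THE B. B > 0 \<and> sqrt (2*pi) * (1 - B\<^sup>2) * exp (B\<^sup>2 / 2) * Phi B = B)"

definition U :: "real \<Rightarrow> real \<Rightarrow> real" where
  "U t x = (if x < Bstar * sqrt (1 - t)
            then sqrt (2*pi*(1 - t)) * (1 - Bstar\<^sup>2) * exp (x\<^sup>2 / (2*(1 - t))) * Phi (x / sqrt (1 - t))
            else x)"

definition f :: "real \<Rightarrow> real \<Rightarrow> real" where
  "f t x = U t x - x"

definition v :: "real \<Rightarrow> real" where
  "v C = (1 / Phi (- C)) * ((1 - Bstar\<^sup>2) * Phi C - C * exp (- C\<^sup>2 / 2) / sqrt (2*pi))"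

definition u :: "real \<Rightarrow> real" where
  "u C = 1 - Bstar\<^sup>2 - (1 - C\<^sup>2) * Phi (- C) - C / sqrt (2*pi) * exp (- C\<^sup>2 / 2)"

definition Cstar :: real where
  "Cstar = (THE C. C < 0 \<and> u C = 0)"

definition Vstar :: "real \<Rightarrow> real \<Rightarrow> real" where
  "Vstar t x = (if x > Cstar * sqrt (1 - t)
     then sqrt (1 - t) * sqrt (2*pi) * Phi (- x / sqrt (1 - t)) * exp (x\<^sup>2 / (2*(1 - t))) * v Cstar
     else f t x)"

end

theory Submission
  imports Defs
begin

text \<open>
  Put \<open>y = x / sqrt (1 - t)\<close> and \<open>K = sqrt (1 - t) sqrt (2 pi) Phi (- y) exp (y\<^sup>2 / 2) \<ge> 0\<close>.
  Then \<open>Vstar = K v(C*)\<close> for \<open>y > C*\<close>, while \<open>f = K v(y)\<close> for \<open>y < B*\<close> and \<open>f = 0\<close> for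
  \<open>y \<ge> B*\<close>, so it suffices that \<open>v\<close> is nonincreasing on \<open>[C*, B*]\<close> with \<open>v(B*) = 0\<close>.
  As \<open>v' = \<phi> u / Phi(- C)\<^sup>2\<close>, this amounts to \<open>u \<le> 0\<close> on \<open>[C*, B*]\<close>.  Both \<open>u\<close> and the
  equation for \<open>B*\<close> are governed by \<open>G(y) = (1 - y\<^sup>2) Phi(y) - y \<phi>(y)\<close>: \<open>B*\<close> is the positive
  zero of \<open>G\<close>, \<open>u(C) = 1 - B*\<^sup>2 - G(- C)\<close> and \<open>G' = - 2 y Phi(y)\<close>.  Hence \<open>u\<close> decreases on
  \<open>(-\<infinity>, 0]\<close>, increases on \<open>[0, \<infinity>)\<close>, and vanishes at \<open>C*\<close> and, by
  \<open>G(y) + G(- y) = 1 - y\<^sup>2\<close>, at \<open>B*\<close>.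
\<close>

lemma interval_lebesgue_integrable_std_normal_density:
  "interval_lebesgue_integrable lborel a b std_normal_density"
  unfolding interval_lebesgue_integrable_def set_integrable_def
  using integrable_mult_indicator[of "einterval a b" lborel std_normal_density]
    integrable_mult_indicator[of "einterval b a" lborel std_normal_density] by auto

lemma Phi_eq_interval_integral: "Phi x = (LBINT y=-\<infinity>..ereal x. std_normal_density y)"
proof -
  have "{y. -\<infinity> \<le> ereal y \<and> ereal y \<le> ereal x} = {..x}" by auto
  then show ?thesis
    unfolding Phi_def by (simp add: interval_integral_Icc')
qed

lemma std_normal_density_minus: "std_normal_density (-x) = std_normal_density x"
  by (simp add: std_normal_density_def)

lemma Phi_minus: "Phi (-x) = 1 - Phi x"
proof -
  have "1 = (LBINT y=-\<infinity>..\<infinity>. std_normal_density y)"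
    by (simp add: interval_lebesgue_integral_def set_lebesgue_integral_def)
  also have "\<dots> = Phi x + (LBINT y=ereal x..\<infinity>. std_normal_density y)"
    unfolding Phi_eq_interval_integral
    by (rule interval_integral_sum[symmetric]) (rule interval_lebesgue_integrable_std_normal_density)
  also have "(LBINT y=ereal x..\<infinity>. std_normal_density y) = Phi (-x)"
    by (subst interval_integral_reflect) (simp add: std_normal_density_minus Phi_eq_interval_integral)
  finally show ?thesis by simp
qed

lemma has_real_derivative_Phi: "(Phi has_real_derivative std_normal_density x) (at x)"
proof -
  let ?F = "\<lambda>z. LBINT y=ereal 0..ereal z. std_normal_density y"
  have "continuous_on {-\<bar>x\<bar>-1..\<bar>x\<bar>+1} std_normal_density"
    unfolding std_normal_density_def by (intro continuous_intros) auto
  then have "(?F has_vector_derivative std_normal_density x) (at x within {-\<bar>x\<bar>-1..\<bar>x\<bar>+1})"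
    by (rule interval_integral_FTC2[rotated 2]) auto
  moreover have "at x within {-\<bar>x\<bar>-1..\<bar>x\<bar>+1} = at x"
    by (rule at_within_interior) auto
  ultimately have "(?F has_real_derivative std_normal_density x) (at x)"
    by (simp add: has_real_derivative_iff_has_vector_derivative)
  moreover have "Phi = (\<lambda>z. Phi 0 + ?F z)"
    unfolding Phi_eq_interval_integral
    by (intro ext interval_integral_sum[symmetric] interval_lebesgue_integrable_std_normal_density)
  ultimately show ?thesis
    using DERIV_add[OF DERIV_const[of "Phi 0"]] by (metis add_0)
qed

lemma has_real_derivative_std_normal_density:
  "(std_normal_density has_real_derivative - x * std_normal_density x) (at x)"
proof -
  have "((\<lambda>x. exp (- x\<^sup>2 / 2)) has_real_derivative - x * exp (- x\<^sup>2 / 2)) (at x)"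
    by (auto intro!: derivative_eq_intros)
  from DERIV_cmult[OF this, of "1 / sqrt (2 * pi)"] show ?thesis
    by (simp add: std_normal_density_def[abs_def])
qed

lemma Phi_has_real_derivative_comp [derivative_intros]:
  "(g has_real_derivative g') (at x within S) \<Longrightarrow>
   ((\<lambda>x. Phi (g x)) has_real_derivative std_normal_density (g x) * g') (at x within S)"
  by (rule DERIV_chain2[OF has_real_derivative_Phi])

lemma std_normal_density_has_real_derivative_comp [derivative_intros]:
  "(g has_real_derivative g') (at x within S) \<Longrightarrow>
   ((\<lambda>x. std_normal_density (g x)) has_real_derivative - g x * std_normal_density (g x) * g') (at x within S)"
  by (rule DERIV_chain2[OF has_real_derivative_std_normal_density])

lemma std_normal_density_pos: "std_normal_density x > 0"
  by (simp add: normal_density_pos)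

lemma Phi_pos: "Phi x > 0"
proof -
  have "Phi (x - 1) \<ge> 0"
    unfolding Phi_def set_lebesgue_integral_def
    by (rule integral_nonneg_AE) (auto simp: indicator_def)
  moreover have "Phi (x - 1) < Phi x"
    by (rule DERIV_pos_imp_increasing) (use has_real_derivative_Phi std_normal_density_pos in auto)
  ultimately show ?thesis by linarith
qed

definition G :: "real \<Rightarrow> real" where
  "G y = (1 - y\<^sup>2) * Phi y - y * std_normal_density y"

lemma has_real_derivative_G: "(G has_real_derivative - 2 * y * Phi y) (at y)"
  unfolding G_def[abs_def]
  by (auto intro!: derivative_eq_intros simp: algebra_simps power2_eq_square)

lemma continuous_on_G: "continuous_on S G"
  using has_real_derivative_G by (meson DERIV_isCont continuous_at_imp_continuous_on)

lemma G_strict_mono_nonpos: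
  assumes "a < b" "b \<le> 0" shows "G a < G b"
proof (rule DERIV_pos_imp_increasing_open[OF assms(1) _ continuous_on_G])
  fix y assume "a < y" "y < b"
  with assms have "- 2 * y * Phi y > 0"
    using Phi_pos[of y] by (simp add: mult_less_0_iff)
  then show "\<exists>d. (G has_real_derivative d) (at y) \<and> d > 0"
    using has_real_derivative_G by blast
qed

lemma G_strict_antimono_nonneg:
  assumes "0 \<le> a" "a < b" shows "G b < G a"
proof (rule DERIV_neg_imp_decreasing_open[OF assms(2) _ continuous_on_G])
  fix y assume "a < y" "y < b"
  with assms have "- 2 * y * Phi y < 0"
    using Phi_pos[of y] by (simp add: mult_less_0_iff)
  then show "\<exists>d. (G has_real_derivative d) (at y) \<and> d < 0"
    using has_real_derivative_G by blast
qed

lemma G_plus_G_minus: "G y + G (- y) = 1 - y\<^sup>2"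
  by (simp add: G_def Phi_minus std_normal_density_minus algebra_simps)

lemma exp_times_std_normal_density: "sqrt (2 * pi) * exp (y\<^sup>2 / 2) * std_normal_density y = 1"
  by (simp add: std_normal_density_def exp_minus field_simps)

lemma Bstar_equation_iff_G_eq_0:
  "sqrt (2 * pi) * (1 - B\<^sup>2) * exp (B\<^sup>2 / 2) * Phi B = B \<longleftrightarrow> G B = 0"
proof -
  define c where "c = sqrt (2 * pi) * exp (B\<^sup>2 / 2)"
  have "sqrt (2 * pi) * (1 - B\<^sup>2) * exp (B\<^sup>2 / 2) * Phi B = c * ((1 - B\<^sup>2) * Phi B)"
    by (simp add: c_def algebra_simps)
  moreover have "B = c * (B * std_normal_density B)"
    using exp_times_std_normal_density[of B] by (simp add: c_def algebra_simps)
  moreover have "c * ((1 - B\<^sup>2) * Phi B) = c * (B * std_normal_density B) \<longleftrightarrow>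
                 (1 - B\<^sup>2) * Phi B = B * std_normal_density B"
    by (simp add: c_def)
  ultimately show ?thesis unfolding G_def by argo
qed

lemma G_1_neg: "G 1 < 0"
  using std_normal_density_pos[of 1] by (simp add: G_def)

lemma ex1_pos_zero_G: "\<exists>!B. B > 0 \<and> G B = 0"
proof -
  have "G 0 > 0" using Phi_pos[of 0] by (simp add: G_def)
  with G_1_neg obtain B where B: "0 \<le> B" "B \<le> 1" "G B = 0"
    using IVT2'[of G 1 0 0] continuous_on_G by auto
  with \<open>G 0 > 0\<close> have "B > 0" by (cases "B = 0") auto
  moreover have "B' = B" if "B' > 0" "G B' = 0" for B'
    using G_strict_antimono_nonneg[of B B'] G_strict_antimono_nonneg[of B' B] that B
    by (cases B B' rule: linorder_cases) auto
  ultimately show ?thesis using B by blast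
qed

lemma Bstar_pos: "Bstar > 0" and G_Bstar: "G Bstar = 0"
  using theI'[OF ex1_pos_zero_G] unfolding Bstar_def Bstar_equation_iff_G_eq_0 by auto

lemma Bstar_less_1: "Bstar < 1"
  using G_1_neg G_Bstar G_strict_antimono_nonneg[of 1 Bstar]
  by (cases Bstar "1::real" rule: linorder_cases) auto

lemma u_eq_G: "u C = 1 - Bstar\<^sup>2 - G (- C)"
  by (simp add: u_def G_def std_normal_density_def)

lemma continuous_on_u: "continuous_on S u"
  unfolding u_eq_G[abs_def]
  by (intro continuous_intros continuous_on_compose2[OF continuous_on_G[of UNIV]]) auto

lemma u_strict_antimono_nonpos: "a < b \<Longrightarrow> b \<le> 0 \<Longrightarrow> u b < u a"
  using G_strict_antimono_nonneg[of "- b" "- a"] by (simp add: u_eq_G)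

lemma u_strict_mono_nonneg: "0 \<le> a \<Longrightarrow> a < b \<Longrightarrow> u a < u b"
  using G_strict_mono_nonpos[of "- b" "- a"] by (simp add: u_eq_G)

lemma u_Bstar: "u Bstar = 0"
  using G_plus_G_minus[of Bstar] G_Bstar by (simp add: u_eq_G)

lemma ex1_neg_zero_u: "\<exists>!C. C < 0 \<and> u C = 0"
proof -
  have "u 0 < 0"
    using u_strict_mono_nonneg[of 0 Bstar] Bstar_pos u_Bstar by simp
  moreover have "u (- 2) > 0"
  proof -
    have "G 2 < 0" using Phi_pos[of 2] std_normal_density_pos[of 2] by (simp add: G_def)
    moreover have "Bstar\<^sup>2 < 1" using Bstar_pos Bstar_less_1 by (simp add: power_less_one_iff)
    ultimately show ?thesis by (simp add: u_eq_G)
  qed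
  ultimately obtain C where C: "- 2 \<le> C" "C \<le> 0" "u C = 0"
    using IVT2'[of u 0 0 "- 2"] continuous_on_u by auto
  with \<open>u 0 < 0\<close> have "C < 0" by (cases "C = 0") auto
  moreover have "C' = C" if "C' < 0" "u C' = 0" for C'
    using u_strict_antimono_nonpos[of C C'] u_strict_antimono_nonpos[of C' C] that C \<open>C < 0\<close>
    by (cases C C' rule: linorder_cases) auto
  ultimately show ?thesis using C by blast
qed

lemma Cstar_neg: "Cstar < 0" and u_Cstar: "u Cstar = 0"
  using theI'[OF ex1_neg_zero_u] unfolding Cstar_def by auto

lemma u_nonpos: "Cstar \<le> C \<Longrightarrow> C \<le> Bstar \<Longrightarrow> u C \<le> 0"
  using u_strict_antimono_nonpos[of Cstar C] u_strict_mono_nonneg[of C Bstar] u_Cstar u_Bstar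
  by (cases "C \<le> 0"; cases "C = Cstar"; cases "C = Bstar") auto

lemma v_eq: "v C = ((1 - Bstar\<^sup>2) * Phi C - C * std_normal_density C) / Phi (- C)"
  by (simp add: v_def std_normal_density_def)

lemma has_real_derivative_v:
  "(v has_real_derivative std_normal_density C * u C / (Phi (- C))\<^sup>2) (at C)"
  unfolding v_eq[abs_def]
  using Phi_pos[of "- C"]
  by (auto intro!: derivative_eq_intros
      simp: u_eq_G G_def Phi_minus std_normal_density_minus field_simps power2_eq_square)

lemma v_antimono:
  assumes "Cstar \<le> y" "y \<le> Bstar" shows "v y \<le> v Cstar"
proof (rule DERIV_nonpos_imp_nonincreasing[OF assms(1)])
  fix z assume "Cstar \<le> z" "z \<le> y"
  with assms have "std_normal_density z * u z / (Phi (- z))\<^sup>2 \<le> 0"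
    using u_nonpos[of z] std_normal_density_pos[of z]
    by (simp add: divide_nonpos_nonneg mult_nonneg_nonpos)
  then show "\<exists>d. (v has_real_derivative d) (at z) \<and> d \<le> 0"
    using has_real_derivative_v by blast
qed

lemma v_Bstar: "v Bstar = 0"
  using G_Bstar by (simp add: v_eq G_def)

lemma v_Cstar_nonneg: "v Cstar \<ge> 0"
  using v_antimono[of Bstar] v_Bstar Cstar_neg Bstar_pos by simp

lemma f_eq_v:
  assumes "t < 1" "x < Bstar * sqrt (1 - t)"
  shows "f t x = sqrt (1 - t) * sqrt (2 * pi) * Phi (- x / sqrt (1 - t))
                 * exp (x\<^sup>2 / (2 * (1 - t))) * v (x / sqrt (1 - t))"
proof -
  define s where "s = sqrt (1 - t)"
  define y where "y = x / s"
  have "s > 0" using assms by (simp add: s_def)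
  then have x: "x = s * y" by (simp add: y_def)
  have "1 - t = s\<^sup>2" using assms by (simp add: s_def)
  with \<open>s > 0\<close> have exp_y: "x\<^sup>2 / (2 * (1 - t)) = y\<^sup>2 / 2"
    unfolding x by (simp add: power_mult_distrib)
  have sqrt_s: "sqrt (2 * pi * (1 - t)) = sqrt (2 * pi) * s"
    by (simp add: s_def real_sqrt_mult)
  have "f t x = sqrt (2 * pi * (1 - t)) * (1 - Bstar\<^sup>2) * exp (x\<^sup>2 / (2 * (1 - t)))
                * Phi (x / sqrt (1 - t)) - x"
    using assms by (simp add: f_def U_def)
  also have "\<dots> = s * sqrt (2 * pi) * exp (y\<^sup>2 / 2) * ((1 - Bstar\<^sup>2) * Phi y)
                  - s * (sqrt (2 * pi) * exp (y\<^sup>2 / 2) * std_normal_density y) * y"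
    unfolding sqrt_s exp_y s_def[symmetric] y_def[symmetric] exp_times_std_normal_density
    by (subst x) (simp add: algebra_simps)
  also have "\<dots> = s * sqrt (2 * pi) * exp (y\<^sup>2 / 2)
                  * ((1 - Bstar\<^sup>2) * Phi y - y * std_normal_density y)"
    by (simp add: algebra_simps)
  also have "(1 - Bstar\<^sup>2) * Phi y - y * std_normal_density y = Phi (- y) * v y"
    using Phi_pos[of "- y"] by (simp add: v_eq)
  finally show ?thesis
    unfolding exp_y s_def[symmetric] minus_divide_left[symmetric] y_def[symmetric]
    by (simp only: ac_simps)
qed

theorem lemma3p2:
  fixes t x :: real
  assumes "0 \<le> t" and "t < 1"
  shows "Vstar t x \<ge> f t x"
proof -
  let ?s = "sqrt (1 - t)"
  let ?K = "?s * sqrt (2 * pi) * Phi (- x / ?s) * exp (x\<^sup>2 / (2 * (1 - t)))"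
  have "?s > 0" using assms by simp
  then have "?K \<ge> 0" using Phi_pos[of "- x / ?s"] by simp
  consider "x \<le> Cstar * ?s" | "Cstar * ?s < x" "x < Bstar * ?s" | "Bstar * ?s \<le> x"
    by linarith
  then show ?thesis
  proof cases
    case 1
    then show ?thesis by (simp add: Vstar_def)
  next
    case 2
    with \<open>?s > 0\<close> have "v (x / ?s) \<le> v Cstar"
      by (intro v_antimono) (simp_all add: pos_le_divide_eq pos_divide_le_eq)
    with 2 \<open>?K \<ge> 0\<close> show ?thesis
      using f_eq_v[OF assms(2)] by (simp add: Vstar_def mult_left_mono)
  next
    case 3
    moreover have "Cstar * ?s < Bstar * ?s"
      using Cstar_neg Bstar_pos \<open>?s > 0\<close> by simp
    ultimately show ?thesis
      using \<open>?K \<ge> 0\<close> v_Cstar_nonneg by (simp add: Vstar_def f_def U_def)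
  qed
qed

end
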